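(* If $T$ is a strongly connected tournament with more than one vertex, then $\overrightarrow{hn}_{P_3^*}(T)=\overrightarrow{hn}_{g}(T)=2$.
   Context: A tournament is an orientation of a complete graph. It is strong (strongly connected) if for every ordered pair of distinct vertices $u,v$ there is a directed $(u,v)$-path. For an oriented graph $D$ consider two interval functions: the geodetic one $I_g(u,v)$ = set of vertices on some shortest directed $(u,v)$-path or some shortest directed $(v,u)$-path; and the distance-two one $I_{P_3^*}(u,v)$ = $\{u,v\}$ together with all vertices $w$ such that $(u,w),(w,v)\in A(D)$ and $(u,v)\notin A(D)$, or $(v,w),(w,u)\in A(D)$ and $(v,u)\notin A(D)$ (i.e. vertices on a shortest directed path of length exactly two between them in either direction). For an interval function $I$ and $S\subseteq V(D)$, $I(S)=\bigcup_{u,v\in S}I(u,v)$; $C$ is convex if $I(C)=C$; the convex hull of $S$ is the smallest convex set containing $S$; a hull set is a set with convex hull $V(D)$; the hull number ($\overrightarrow{hn}_g$, resp. $\overrightarrow{hn}_{P_3^*}$) is the minimum size of a hull set for the respective interval function. *)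

theory Defs
  imports Main
begin

definition oriented_graph :: "'a set \<Rightarrow> ('a \<times> 'a) set \<Rightarrow> bool" where
  "oriented_graph V A \<longleftrightarrow> finite V \<and> A \<subseteq> V \<times> V \<and>
     (\<forall>u. (u, u) \<notin> A) \<and> (\<forall>u v. (u, v) \<in> A \<longrightarrow> (v, u) \<notin> A)"

definition tournament :: "'a set \<Rightarrow> ('a \<times> 'a) set \<Rightarrow> bool" where
  "tournament V A \<longleftrightarrow> oriented_graph V A \<and>
     (\<forall>u\<in>V. \<forall>v\<in>V. u \<noteq> v \<longrightarrow> (u, v) \<in> A \<or> (v, u) \<in> A)"

definition dpath :: "('a \<times> 'a) set \<Rightarrow> 'a list \<Rightarrow> 'a \<Rightarrow> 'a \<Rightarrow> bool" where
  "dpath A p u v \<longleftrightarrow> p \<noteq> [] \<and> hd p = u \<and> last p = v \<and> distinct p \<and>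
     (\<forall>i. Suc i < length p \<longrightarrow> (p ! i, p ! Suc i) \<in> A)"

definition strongly_connected :: "'a set \<Rightarrow> ('a \<times> 'a) set \<Rightarrow> bool" where
  "strongly_connected V A \<longleftrightarrow> (\<forall>u\<in>V. \<forall>v\<in>V. u \<noteq> v \<longrightarrow> (\<exists>p. dpath A p u v))"

definition shortest_dpath :: "('a \<times> 'a) set \<Rightarrow> 'a list \<Rightarrow> 'a \<Rightarrow> 'a \<Rightarrow> bool" where
  "shortest_dpath A p u v \<longleftrightarrow> dpath A p u v \<and> (\<forall>q. dpath A q u v \<longrightarrow> length p \<le> length q)"

definition I_g :: "('a \<times> 'a) set \<Rightarrow> 'a \<Rightarrow> 'a \<Rightarrow> 'a set" where
  "I_g A u v = {w. \<exists>p. (shortest_dpath A p u v \<or> shortest_dpath A p v u) \<and> w \<in> set p}"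

definition I_P3 :: "('a \<times> 'a) set \<Rightarrow> 'a \<Rightarrow> 'a \<Rightarrow> 'a set" where
  "I_P3 A u v = {u, v} \<union>
     {w. ((u, w) \<in> A \<and> (w, v) \<in> A \<and> (u, v) \<notin> A) \<or> ((v, w) \<in> A \<and> (w, u) \<in> A \<and> (v, u) \<notin> A)}"

definition interval_image :: "('a \<Rightarrow> 'a \<Rightarrow> 'a set) \<Rightarrow> 'a set \<Rightarrow> 'a set" where
  "interval_image I S = (\<Union>u\<in>S. \<Union>v\<in>S. I u v)"

definition is_convex :: "('a \<Rightarrow> 'a \<Rightarrow> 'a set) \<Rightarrow> 'a set \<Rightarrow> bool" where
  "is_convex I C \<longleftrightarrow> interval_image I C = C"

definition convex_hull_of :: "('a \<Rightarrow> 'a \<Rightarrow> 'a set) \<Rightarrow> 'a set \<Rightarrow> 'a set \<Rightarrow> 'a set" where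
  "convex_hull_of I V S = \<Inter>{C. C \<subseteq> V \<and> S \<subseteq> C \<and> is_convex I C}"

definition hull_set :: "('a \<Rightarrow> 'a \<Rightarrow> 'a set) \<Rightarrow> 'a set \<Rightarrow> 'a set \<Rightarrow> bool" where
  "hull_set I V S \<longleftrightarrow> S \<subseteq> V \<and> convex_hull_of I V S = V"

definition hull_number :: "('a \<Rightarrow> 'a \<Rightarrow> 'a set) \<Rightarrow> 'a set \<Rightarrow> nat" where
  "hull_number I V = (LEAST k. \<exists>S. hull_set I V S \<and> card S = k)"

end

(*
  Singletons are convex for both interval functions, so every hull set has at least two
  vertices; and in a tournament every P3*-interval lies in the geodetic interval, so a
  P3*-hull set is also a geodetic hull set.  It remains to find a, b whose P3*-hull C is V.
  Take a, b with |C| maximal; a 3-cycle gives |C| >= 3.  For w outside C, whether c -> w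
  holds is constant along P3*-intervals inside C, so the vertices of C on the same side of w
  as a, together with b, form a convex set.  Hence w dominates all of C or is dominated by
  all of C, unless C = {a, b}.  Strong connectivity then gives an arc x -> y with C -> x and
  y -> C; every c in C lies on the path y -> c -> x, so the hull of {x, y} contains C and x,
  contradicting maximality.
*)
theory Submission
  imports Defs
begin

lemma convexD: "is_convex I C \<Longrightarrow> u \<in> C \<Longrightarrow> v \<in> C \<Longrightarrow> I u v \<subseteq> C"
  unfolding is_convex_def interval_image_def by blast

lemma is_convexI:
  assumes "\<And>x. x \<in> C \<Longrightarrow> x \<in> I x x" and "\<And>u v. u \<in> C \<Longrightarrow> v \<in> C \<Longrightarrow> I u v \<subseteq> C"
  shows "is_convex I C"
  using assms unfolding is_convex_def interval_image_def by blast

lemma convex_hull_of_least: "D \<subseteq> V \<Longrightarrow> S \<subseteq> D \<Longrightarrow> is_convex I D \<Longrightarrow> convex_hull_of I V S \<subseteq> D"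
  unfolding convex_hull_of_def by blast

lemma subset_convex_hull_of: "S \<subseteq> convex_hull_of I V S"
  unfolding convex_hull_of_def by blast

lemma is_convex_convex_hull_of:
  assumes "\<And>x. x \<in> I x x"
  shows "is_convex I (convex_hull_of I V S)"
proof (rule is_convexI)
  show "I u v \<subseteq> convex_hull_of I V S"
    if "u \<in> convex_hull_of I V S" "v \<in> convex_hull_of I V S" for u v
    unfolding convex_hull_of_def
  proof (rule Inter_greatest)
    fix D assume D: "D \<in> {C. C \<subseteq> V \<and> S \<subseteq> C \<and> is_convex I C}"
    then have "u \<in> D" "v \<in> D" using that unfolding convex_hull_of_def by auto
    then show "I u v \<subseteq> D" using D convexD[of I D u v] by simp
  qed
qed (rule assms)

lemma hull_set_mono_interval:
  assumes "hull_set I V S" and "\<And>u v. u \<in> V \<Longrightarrow> v \<in> V \<Longrightarrow> I u v \<subseteq> J u v"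
    and "\<And>x. x \<in> I x x" and "is_convex J V"
  shows "hull_set J V S"
proof -
  have SV: "S \<subseteq> V" and hull: "convex_hull_of I V S = V"
    using assms(1) by (auto simp: hull_set_def)
  have "V \<subseteq> D" if D: "D \<subseteq> V" "S \<subseteq> D" "is_convex J D" for D
  proof -
    have "is_convex I D"
    proof (rule is_convexI)
      show "I u v \<subseteq> D" if "u \<in> D" "v \<in> D" for u v
        using assms(2)[of u v] convexD[OF D(3) that] that D(1) by blast
    qed (rule assms(3))
    then show ?thesis using convex_hull_of_least[OF D(1,2)] hull by blast
  qed
  then have "V \<subseteq> convex_hull_of J V S"
    unfolding convex_hull_of_def by (intro Inter_greatest) auto
  moreover have "convex_hull_of J V S \<subseteq> V"
    using convex_hull_of_least[OF order_refl SV assms(4)] .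
  ultimately show ?thesis using SV by (auto simp: hull_set_def)
qed

lemma hull_set_card_ge_2:
  assumes "finite V" and "card V > 1" and "\<And>x. x \<in> V \<Longrightarrow> I x x = {x}"
    and "hull_set I V S"
  shows "2 \<le> card S"
proof (rule ccontr)
  assume "\<not> 2 \<le> card S"
  then have small: "card S \<le> Suc 0" by simp
  have SV: "S \<subseteq> V" and hull: "convex_hull_of I V S = V"
    using assms(4) by (auto simp: hull_set_def)
  have fin: "finite S" using SV assms(1) finite_subset by blast
  have "is_convex I S"
  proof (cases "S = {}")
    case True
    then show ?thesis by (simp add: is_convex_def interval_image_def)
  next
    case False
    then have "card S = 1" using small fin by (simp add: le_Suc_eq card_eq_0_iff)
    then obtain x where "S = {x}" by (rule card_1_singletonE)
    then show ?thesis using SV assms(3) by (simp add: is_convex_def interval_image_def)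
  qed
  then have "V \<subseteq> S" using convex_hull_of_least[OF SV order_refl] hull by blast
  then have "card V \<le> card S" by (rule card_mono[OF fin])
  then show False using small assms(2) by linarith
qed

lemma hull_number_eq_2:
  assumes "finite V" and "card V > 1" and "\<And>x. x \<in> V \<Longrightarrow> I x x = {x}"
    and "hull_set I V {a, b}"
  shows "hull_number I V = 2"
proof -
  have "card {a, b} \<le> 2" by (cases "a = b") auto
  then have card_ab: "card {a, b} = 2" using hull_set_card_ge_2[of V I, OF assms] by simp
  show ?thesis
    unfolding hull_number_def
  proof (rule Least_equality)
    show "\<exists>S. hull_set I V S \<and> card S = 2" using assms(4) card_ab by blast
    show "2 \<le> k" if "\<exists>S. hull_set I V S \<and> card S = k" for k
      using that hull_set_card_ge_2[of V I, OF assms(1-3)] by blast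
  qed
qed

lemma ex_consecutive_crossing:
  assumes "xs \<noteq> []" and "P (hd xs)" and "\<not> P (last xs)"
  shows "\<exists>i. Suc i < length xs \<and> P (xs ! i) \<and> \<not> P (xs ! Suc i)"
  using assms
proof (induction xs rule: list_nonempty_induct)
  case (cons x xs)
  show ?case
  proof (cases "P (hd xs)")
    case True
    with cons obtain i where "Suc i < length xs" "P (xs ! i)" "\<not> P (xs ! Suc i)"
      by auto
    then show ?thesis by (intro exI[of _ "Suc i"]) auto
  next
    case False
    then show ?thesis using cons.hyps cons.prems by (intro exI[of _ 0]) (auto simp: hd_conv_nth)
  qed
qed simp

lemma dpath_arc_leaving:
  assumes "dpath A p u v" and "u \<in> S" and "v \<notin> S"
  shows "\<exists>x y. x \<in> S \<and> y \<notin> S \<and> (x, y) \<in> A"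
  using assms ex_consecutive_crossing[of p "\<lambda>x. x \<in> S"] unfolding dpath_def by metis

lemma strongly_connected_arc_leaving:
  assumes "strongly_connected V A" and "u \<in> V" "u \<in> S" and "v \<in> V" "v \<notin> S"
  obtains x y where "x \<in> S" "y \<notin> S" "(x, y) \<in> A"
  using assms dpath_arc_leaving unfolding strongly_connected_def by metis

lemma dpath_subset:
  assumes "dpath A p u v" and "A \<subseteq> V \<times> V" and "u \<in> V"
  shows "set p \<subseteq> V"
proof
  fix z assume "z \<in> set p"
  then obtain i where i: "i < length p" "p ! i = z" by (auto simp: in_set_conv_nth)
  show "z \<in> V"
  proof (cases i)
    case 0
    then show ?thesis using i assms by (auto simp: dpath_def hd_conv_nth)
  next
    case (Suc j)
    then have "(p ! j, z) \<in> A" using assms(1) i unfolding dpath_def by auto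
    then show ?thesis using assms(2) by auto
  qed
qed

lemma dpath_loop: "dpath A p u u \<Longrightarrow> p = [u]"
  by (cases p) (auto simp: dpath_def split: if_splits dest: last_in_set)

lemma dpath_length_ge_2: "dpath A p u v \<Longrightarrow> u \<noteq> v \<Longrightarrow> 2 \<le> length p"
  by (cases p) (auto simp: dpath_def Suc_le_eq split: if_splits)

lemma dpath_length_2: "dpath A p u v \<Longrightarrow> length p = 2 \<Longrightarrow> (u, v) \<in> A"
  unfolding dpath_def by (cases p; cases "tl p") auto

lemma shortest_dpath_single: "shortest_dpath A [x] x x"
  by (auto simp: shortest_dpath_def dpath_def Suc_le_eq)

lemma shortest_dpath_arc:
  assumes "(u, v) \<in> A" and "u \<noteq> v"
  shows "shortest_dpath A [u, v] u v"
proof -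
  have "dpath A [u, v] u v" using assms by (auto simp: dpath_def less_Suc_eq)
  moreover have "length [u, v] \<le> length q" if "dpath A q u v" for q
    using dpath_length_ge_2[OF that assms(2)] by simp
  ultimately show ?thesis by (auto simp: shortest_dpath_def)
qed

lemma shortest_dpath_two_arcs:
  assumes "(u, z) \<in> A" and "(z, v) \<in> A" and "(u, v) \<notin> A" and "distinct [u, z, v]"
  shows "shortest_dpath A [u, z, v] u v"
proof -
  have "dpath A [u, z, v] u v"
    using assms by (auto simp: dpath_def less_Suc_eq nth_Cons split: nat.splits)
  moreover have "length [u, z, v] \<le> length q" if q: "dpath A q u v" for q
  proof -
    have "2 \<le> length q" using dpath_length_ge_2[OF q] assms(4) by simp
    moreover have "length q \<noteq> 2" using dpath_length_2[OF q] assms(3) by blast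
    ultimately show ?thesis by simp
  qed
  ultimately show ?thesis by (auto simp: shortest_dpath_def)
qed

lemma I_g_loop: "I_g A x x = {x}"
proof
  show "I_g A x x \<subseteq> {x}"
  proof
    fix z assume "z \<in> I_g A x x"
    then obtain p where "dpath A p x x" "z \<in> set p"
      unfolding I_g_def shortest_dpath_def by blast
    then show "z \<in> {x}" using dpath_loop[of A p x] by simp
  qed
  show "{x} \<subseteq> I_g A x x"
    using shortest_dpath_single[of A x] unfolding I_g_def by auto
qed

lemma is_convex_I_g_vertices:
  assumes "A \<subseteq> V \<times> V"
  shows "is_convex (I_g A) V"
proof (rule is_convexI)
  show "I_g A u v \<subseteq> V" if "u \<in> V" "v \<in> V" for u v
  proof
    fix z assume "z \<in> I_g A u v"
    then obtain p where "dpath A p u v \<or> dpath A p v u" "z \<in> set p"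
      unfolding I_g_def shortest_dpath_def by blast
    then show "z \<in> V" using dpath_subset[OF _ assms] that by blast
  qed
qed (simp add: I_g_loop)

context
  fixes V :: "'a set" and A :: "('a \<times> 'a) set"
  assumes tournament: "tournament V A"
begin

lemma tournament_finite: "finite V"
  and tournament_arcs: "A \<subseteq> V \<times> V"
  and tournament_irrefl: "(u, u) \<notin> A"
  and tournament_asym: "(u, v) \<in> A \<Longrightarrow> (v, u) \<notin> A"
  and tournament_total: "u \<in> V \<Longrightarrow> v \<in> V \<Longrightarrow> u \<noteq> v \<Longrightarrow> (u, v) \<in> A \<or> (v, u) \<in> A"
  using tournament by (auto simp: tournament_def oriented_graph_def)

lemma I_P3_loop: "I_P3 A x x = {x}"
  using tournament_asym unfolding I_P3_def by blast

lemma is_convex_I_P3_vertices: "is_convex (I_P3 A) V"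
  using tournament_arcs by (intro is_convexI) (auto simp: I_P3_def)

lemma endpoints_in_I_g:
  assumes "u \<in> V" and "v \<in> V"
  shows "{u, v} \<subseteq> I_g A u v"
proof (cases "u = v")
  case True
  then show ?thesis by (simp add: I_g_loop)
next
  case False
  then obtain p where "shortest_dpath A p u v \<or> shortest_dpath A p v u" "set p = {u, v}"
    using tournament_total[OF assms] shortest_dpath_arc[of u v A] shortest_dpath_arc[of v u A]
    by (metis empty_set insert_commute list.simps(15))
  then show ?thesis unfolding I_g_def by blast
qed

lemma I_P3_subset_I_g:
  assumes "u \<in> V" and "v \<in> V"
  shows "I_P3 A u v \<subseteq> I_g A u v"
proof
  fix z assume "z \<in> I_P3 A u v"
  then consider "z \<in> {u, v}" | "(u, z) \<in> A" "(z, v) \<in> A" "(u, v) \<notin> A"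
    | "(v, z) \<in> A" "(z, u) \<in> A" "(v, u) \<notin> A"
    unfolding I_P3_def by blast
  then show "z \<in> I_g A u v"
  proof cases
    case 1
    then show ?thesis using endpoints_in_I_g[OF assms] by blast
  next
    case 2
    then have "shortest_dpath A [u, z, v] u v"
      using tournament_irrefl tournament_asym by (intro shortest_dpath_two_arcs) auto
    then show ?thesis unfolding I_g_def by force
  next
    case 3
    then have "shortest_dpath A [v, z, u] v u"
      using tournament_irrefl tournament_asym by (intro shortest_dpath_two_arcs) auto
    then show ?thesis unfolding I_g_def by force
  qed
qed

lemma strongly_connected_tournament_3_cycle:
  assumes "strongly_connected V A" and "card V > 1"
  obtains x y z where "(x, y) \<in> A" "(y, z) \<in> A" "(z, x) \<in> A"
proof -
  have "\<not> card V \<le> Suc 0" using assms(2) by simp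
  then obtain u v where "u \<in> V" "v \<in> V" "u \<noteq> v"
    using card_le_Suc0_iff_eq[OF tournament_finite] by blast
  then obtain x y where xy: "(x, y) \<in> A" using tournament_total by blast
  then have "x \<in> V" "y \<in> V" using tournament_arcs by auto
  then obtain s t where s: "(x, s) \<in> A" and t: "(x, t) \<notin> A" and st: "(s, t) \<in> A"
    using strongly_connected_arc_leaving[OF assms(1), of y "{s. (x, s) \<in> A}" x] xy tournament_irrefl
    by auto
  have "t \<noteq> x" using s st tournament_asym by blast
  moreover have "t \<in> V" using st tournament_arcs by auto
  ultimately have "(t, x) \<in> A" using tournament_total[OF _ \<open>x \<in> V\<close>] t by blast
  then show thesis using that s st by blast
qed

abbreviation P3_hull :: "'a \<Rightarrow> 'a \<Rightarrow> 'a set" where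
  "P3_hull a b \<equiv> convex_hull_of (I_P3 A) V {a, b}"

lemma is_convex_P3_hull: "is_convex (I_P3 A) (convex_hull_of (I_P3 A) V S)"
  by (rule is_convex_convex_hull_of) (simp add: I_P3_def)

lemma P3_hull_subset: "S \<subseteq> V \<Longrightarrow> convex_hull_of (I_P3 A) V S \<subseteq> V"
  using convex_hull_of_least[OF order_refl _ is_convex_I_P3_vertices] .

lemma finite_P3_hull: "a \<in> V \<Longrightarrow> b \<in> V \<Longrightarrow> finite (P3_hull a b)"
  using finite_subset[OF P3_hull_subset tournament_finite] by simp

lemma card_P3_hull_3_cycle:
  assumes "(x, y) \<in> A" "(y, z) \<in> A" "(z, x) \<in> A"
  shows "3 \<le> card (P3_hull x y)"
proof -
  have xV: "x \<in> V" and yV: "y \<in> V" using assms(1) tournament_arcs by auto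
  have "z \<in> I_P3 A x y" using assms tournament_asym unfolding I_P3_def by blast
  then have "{x, y, z} \<subseteq> P3_hull x y"
    using convexD[OF is_convex_P3_hull] subset_convex_hull_of[of "{x, y}" "I_P3 A" V] by blast
  then have "card {x, y, z} \<le> card (P3_hull x y)"
    by (rule card_mono[OF finite_P3_hull[OF xV yV]])
  moreover have "x \<noteq> y" "y \<noteq> z" "z \<noteq> x" using assms tournament_irrefl by metis+
  ultimately show ?thesis by simp
qed

lemma P3_convex_arc_side:
  assumes "is_convex (I_P3 A) C" and "x \<in> C" "y \<in> C" and "w \<in> V" "w \<notin> C"
    and "(x, y) \<in> A" "(y, w) \<in> A"
  shows "(x, w) \<in> A"
proof (rule ccontr)
  assume "(x, w) \<notin> A"
  moreover have "x \<in> V" "x \<noteq> w" using assms tournament_arcs by auto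
  ultimately have "(w, x) \<in> A" using tournament_total assms(4) by blast
  then have "w \<in> I_P3 A x y" using assms(6,7) tournament_asym unfolding I_P3_def by blast
  then show False using convexD[OF assms(1-3)] assms(5) by blast
qed

lemma P3_convex_interval_side:
  assumes conv: "is_convex (I_P3 A) C" and "u \<in> C" "v \<in> C" and "w \<in> V" "w \<notin> C"
    and "(u, z) \<in> A" "(z, v) \<in> A" "(u, v) \<notin> A"
  shows "z \<in> C \<and> ((z, w) \<in> A \<longleftrightarrow> (u, w) \<in> A) \<and> ((v, w) \<in> A \<longleftrightarrow> (u, w) \<in> A)"
proof -
  have "z \<in> I_P3 A u v" using assms(6-8) unfolding I_P3_def by blast
  then have "z \<in> C" using convexD[OF conv assms(2,3)] by blast
  moreover have "(u, w) \<in> A \<Longrightarrow> (v, w) \<in> A"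
  proof (rule ccontr)
    assume "(u, w) \<in> A" "(v, w) \<notin> A"
    moreover have "v \<in> V" "v \<noteq> w" using assms tournament_arcs by auto
    ultimately have "w \<in> I_P3 A u v"
      using tournament_total assms(4,8) unfolding I_P3_def by blast
    then show False using convexD[OF conv assms(2,3)] assms(5) by blast
  qed
  ultimately show ?thesis
    using P3_convex_arc_side[OF conv] assms by meson
qed

lemma P3_convex_side_insert:
  assumes conv: "is_convex (I_P3 A) C" and "x \<in> C" "y \<in> C" and "w \<in> V" "w \<notin> C"
  shows "is_convex (I_P3 A) (insert y {c \<in> C. (c, w) \<in> A \<longleftrightarrow> (x, w) \<in> A})" (is "is_convex _ ?D")
proof (rule is_convexI)
  have closed: "z \<in> ?D" if "u \<in> ?D" "v \<in> ?D" "(u, z) \<in> A" "(z, v) \<in> A" "(u, v) \<notin> A" for u v z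
  proof -
    have "u \<in> C" "v \<in> C" using that(1,2) assms(3) by auto
    then have "z \<in> C" and "(z, w) \<in> A \<longleftrightarrow> (u, w) \<in> A" and "(v, w) \<in> A \<longleftrightarrow> (u, w) \<in> A"
      using P3_convex_interval_side[OF conv _ _ assms(4,5) that(3-5)] by blast+
    moreover have "u \<noteq> v" using that(3,4) tournament_asym by blast
    then have "((u, w) \<in> A \<longleftrightarrow> (x, w) \<in> A) \<or> ((v, w) \<in> A \<longleftrightarrow> (x, w) \<in> A)"
      using that(1,2) by blast
    ultimately show ?thesis by blast
  qed
  show "I_P3 A u v \<subseteq> ?D" if "u \<in> ?D" "v \<in> ?D" for u v
  proof
    fix z assume "z \<in> I_P3 A u v"
    then consider "z = u" | "z = v" | "(u, z) \<in> A" "(z, v) \<in> A" "(u, v) \<notin> A"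
      | "(v, z) \<in> A" "(z, u) \<in> A" "(v, u) \<notin> A"
      unfolding I_P3_def by blast
    then show "z \<in> ?D"
    proof cases
      case 1
      then show ?thesis using that(1) by simp
    next
      case 2
      then show ?thesis using that(2) by simp
    next
      case 3
      show ?thesis by (rule closed[OF that 3])
    next
      case 4
      show ?thesis by (rule closed[OF that(2,1) 4])
    qed
  qed
qed (simp add: I_P3_def)

lemma P3_hull_side:
  assumes "a \<in> V" "b \<in> V" and "w \<in> V" "w \<notin> P3_hull a b" and "c \<in> P3_hull a b"
  shows "c = b \<or> ((c, w) \<in> A \<longleftrightarrow> (a, w) \<in> A)"
proof -
  have ab: "a \<in> P3_hull a b" "b \<in> P3_hull a b"
    using subset_convex_hull_of[of "{a, b}" "I_P3 A" V] by auto
  have "P3_hull a b \<subseteq> insert b {c \<in> P3_hull a b. (c, w) \<in> A \<longleftrightarrow> (a, w) \<in> A}"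
  proof (rule convex_hull_of_least)
    show "insert b {c \<in> P3_hull a b. (c, w) \<in> A \<longleftrightarrow> (a, w) \<in> A} \<subseteq> V"
      using P3_hull_subset[of "{a, b}"] assms(1,2) by auto
    show "{a, b} \<subseteq> insert b {c \<in> P3_hull a b. (c, w) \<in> A \<longleftrightarrow> (a, w) \<in> A}"
      using ab by auto
    show "is_convex (I_P3 A) (insert b {c \<in> P3_hull a b. (c, w) \<in> A \<longleftrightarrow> (a, w) \<in> A})"
      by (rule P3_convex_side_insert[OF is_convex_P3_hull ab assms(3,4)])
  qed
  then show ?thesis using assms(5) by blast
qed

lemma P3_hull_dominance:
  assumes "a \<in> V" "b \<in> V" and "\<not> P3_hull a b \<subseteq> {a, b}" and "w \<in> V" "w \<notin> P3_hull a b"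
  shows "(\<forall>c \<in> P3_hull a b. (c, w) \<in> A) \<or> (\<forall>c \<in> P3_hull a b. (w, c) \<in> A)"
proof -
  have side_a: "c = b \<or> ((c, w) \<in> A \<longleftrightarrow> (a, w) \<in> A)" if "c \<in> P3_hull a b" for c
    using P3_hull_side[OF assms(1,2,4,5) that] .
  have side_b: "c = a \<or> ((c, w) \<in> A \<longleftrightarrow> (b, w) \<in> A)" if "c \<in> P3_hull a b" for c
    using P3_hull_side[of b a w c] assms(1,2,4,5) that by (simp add: insert_commute)
  have in_arc: "(w, c) \<in> A" if "c \<in> P3_hull a b" "(c, w) \<notin> A" for c
  proof -
    have "c \<in> V" using that(1) P3_hull_subset[of "{a, b}"] assms(1,2) by auto
    moreover have "c \<noteq> w" using that(1) assms(5) by auto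
    ultimately show ?thesis using tournament_total[OF _ assms(4)] that(2) by blast
  qed
  show ?thesis
  proof (cases "(a, w) \<in> A \<longleftrightarrow> (b, w) \<in> A")
    case True
    then have "\<forall>c \<in> P3_hull a b. (c, w) \<in> A \<longleftrightarrow> (a, w) \<in> A" using side_a by blast
    then show ?thesis using in_arc by blast
  next
    case False
    then have "P3_hull a b \<subseteq> {a, b}" using side_a side_b by blast
    with assms(3) show ?thesis by contradiction
  qed
qed

lemma P3_hull_grows:
  assumes strong: "strongly_connected V A" and "a \<in> V" "b \<in> V"
    and "\<not> P3_hull a b \<subseteq> {a, b}" and "P3_hull a b \<noteq> V"
  obtains x y where "x \<in> V" "y \<in> V" "P3_hull a b \<subset> P3_hull x y"
proof -
  let ?C = "P3_hull a b"
  have CV: "?C \<subseteq> V" using P3_hull_subset[of "{a, b}"] assms(2,3) by simp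
  have aC: "a \<in> ?C" using subset_convex_hull_of[of "{a, b}" "I_P3 A" V] by auto
  define X where "X = {x \<in> V. x \<notin> ?C \<and> (\<forall>c \<in> ?C. (c, x) \<in> A)}"
  define Y where "Y = {y \<in> V. y \<notin> ?C \<and> (\<forall>c \<in> ?C. (y, c) \<in> A)}"
  have XY: "x \<in> X \<or> x \<in> Y" if "x \<in> V" "x \<notin> ?C" for x
    using P3_hull_dominance[OF assms(2-4) that] that unfolding X_def Y_def by blast
  obtain w where "w \<in> V" "w \<notin> ?C" using CV assms(5) by blast
  then obtain c x0 where c: "c \<in> ?C" and x0: "x0 \<notin> ?C" "(c, x0) \<in> A"
    by (rule strongly_connected_arc_leaving[OF strong assms(2) aC])
  have "x0 \<in> V" using x0(2) tournament_arcs by auto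
  moreover have "x0 \<notin> Y" using c x0(2) tournament_asym unfolding Y_def by blast
  ultimately have "x0 \<in> X" using XY x0(1) by blast
  moreover have "a \<notin> X" using aC unfolding X_def by blast
  ultimately obtain x y where x: "x \<in> X" and y: "y \<notin> X" and xy: "(x, y) \<in> A"
    using strongly_connected_arc_leaving[OF strong \<open>x0 \<in> V\<close> _ assms(2)] by blast
  have xV: "x \<in> V" and yV: "y \<in> V" using xy tournament_arcs by auto
  have "y \<notin> ?C" using x xy tournament_asym unfolding X_def by blast
  then have "y \<in> Y" using XY[OF yV] y by blast
  have "?C \<subseteq> I_P3 A x y"
    using x \<open>y \<in> Y\<close> xy tournament_asym unfolding X_def Y_def I_P3_def by blast
  also have "I_P3 A x y \<subseteq> P3_hull x y"
    using convexD[OF is_convex_P3_hull] subset_convex_hull_of[of "{x, y}" "I_P3 A" V] by blast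
  finally have "insert x ?C \<subseteq> P3_hull x y"
    using subset_convex_hull_of[of "{x, y}" "I_P3 A" V] by blast
  moreover have "x \<notin> ?C" using x unfolding X_def by blast
  ultimately show thesis using that xV yV by blast
qed

lemma P3_hull_eq_vertices:
  assumes strong: "strongly_connected V A" and "card V > 1"
  obtains a b where "a \<in> V" "b \<in> V" "P3_hull a b = V"
proof -
  define hull_size where "hull_size q = card (P3_hull (fst q) (snd q))" for q
  have hull_size_le: "hull_size q \<le> card V" if "q \<in> V \<times> V" for q
    unfolding hull_size_def using that card_mono[OF tournament_finite P3_hull_subset] by auto
  obtain x y z where xyz: "(x, y) \<in> A" "(y, z) \<in> A" "(z, x) \<in> A"
    using strongly_connected_tournament_3_cycle[OF assms] .
  then have xyV: "(x, y) \<in> V \<times> V" using tournament_arcs by auto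
  have "\<exists>q. q \<in> V \<times> V \<and> (\<forall>q'. q' \<in> V \<times> V \<longrightarrow> hull_size q' \<le> hull_size q)"
    by (rule ex_has_greatest_nat[of _ "(x, y)" _ "Suc (card V)"])
      (use xyV hull_size_le in \<open>auto simp: less_Suc_eq_le\<close>)
  then obtain a b where ab: "a \<in> V" "b \<in> V"
    and max: "\<And>x' y'. x' \<in> V \<Longrightarrow> y' \<in> V \<Longrightarrow> hull_size (x', y') \<le> hull_size (a, b)"
    by auto
  have xV: "x \<in> V" and yV: "y \<in> V" using xyV by auto
  have "3 \<le> hull_size (x, y)" using card_P3_hull_3_cycle[OF xyz] unfolding hull_size_def by simp
  then have "3 \<le> card (P3_hull a b)" using max[OF xV yV] unfolding hull_size_def by simp
  moreover have "card {a, b} \<le> 2" by (cases "a = b") auto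
  ultimately have not_pair: "\<not> P3_hull a b \<subseteq> {a, b}"
    using card_mono[of "{a, b}" "P3_hull a b"] by auto
  have "P3_hull a b = V"
  proof (rule ccontr)
    assume "P3_hull a b \<noteq> V"
    then obtain x' y' where x'y': "x' \<in> V" "y' \<in> V" and "P3_hull a b \<subset> P3_hull x' y'"
      using P3_hull_grows[OF strong ab not_pair] by blast
    then have "card (P3_hull a b) < card (P3_hull x' y')"
      using psubset_card_mono[OF finite_P3_hull[OF x'y']] by blast
    then show False using max[OF x'y'] unfolding hull_size_def by simp
  qed
  then show thesis using that ab by blast
qed

end

theorem proposition5:
  fixes V :: "'a set" and A :: "('a \<times> 'a) set"
  assumes "tournament V A"
    and "strongly_connected V A"
    and "card V > 1"
  shows "hull_number (I_P3 A) V = 2 \<and> hull_number (I_g A) V = 2"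
proof -
  obtain a b where "a \<in> V" "b \<in> V" "convex_hull_of (I_P3 A) V {a, b} = V"
    using P3_hull_eq_vertices[OF assms] .
  then have P3: "hull_set (I_P3 A) V {a, b}" by (simp add: hull_set_def)
  have g: "hull_set (I_g A) V {a, b}"
  proof (rule hull_set_mono_interval[OF P3])
    show "I_P3 A u v \<subseteq> I_g A u v" if "u \<in> V" "v \<in> V" for u v
      using I_P3_subset_I_g[OF assms(1) that] .
    show "is_convex (I_g A) V"
      using is_convex_I_g_vertices[OF tournament_arcs[OF assms(1)]] .
  qed (simp add: I_P3_def)
  have fin: "finite V" using tournament_finite[OF assms(1)] .
  show ?thesis
  proof
    show "hull_number (I_P3 A) V = 2"
      by (rule hull_number_eq_2[OF fin assms(3) _ P3]) (simp add: I_P3_loop[OF assms(1)])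
    show "hull_number (I_g A) V = 2"
      by (rule hull_number_eq_2[OF fin assms(3) _ g]) (simp add: I_g_loop)
  qed
qed

end
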